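(* For all $\widehat\psi_1,\widehat\psi_2\in\mathcal{M}_0$ with $\widehat\psi_1\le\widehat\psi_2$ entrywise, one has $\widehat\Phi(\widehat\psi_1)\ge\widehat\Phi(\widehat\psi_2)$ entrywise.
   Context: Discrete setting: $\Omega=(0,1)$, $T>0$, $\sigma>0$; $u_T:[0,1]\to\mathbb{R}$ bounded. $f:[0,1]\times\mathbb{R}\to\mathbb{R}$ is continuous and nonincreasing in its second variable, bounded, and $f\le0$. For positive integers $I,J$: $\Delta t=T/I$, $\Delta x=1/J$, $x_j=j\Delta x$. $\mathcal{M}$ is the set of real matrices $(m_{i,j})_{0\le i\le I,0\le j\le J}$, $\mathcal{M}_\epsilon=\{m\in\mathcal{M}: m_{i,j}\ge\epsilon\ \forall i,j\}$. For $\widehat\psi\in\mathcal{M}_0$, $\widehat\Phi(\widehat\psi)$ is the unique $\widehat\phi\in\mathcal{M}$ with $\widehat\phi_{I,j}=\exp(u_T(x_j)/\sigma^2)$ and, for $0\le i\le I-1$, $0\le j\le J$, $\frac{\widehat\phi_{i+1,j}-\widehat\phi_{i,j}}{\Delta t}+\frac{\sigma^2}{2}\frac{\widehat\phi_{i,j+1}-2\widehat\phi_{i,j}+\widehat\phi_{i,j-1}}{(\Delta x)^2}=-\frac{1}{\sigma^2}f(x_j,\widehat\phi_{i,j}\widehat\psi_{i,j})\widehat\phi_{i,j}$, with conventions $\widehat\phi_{i,-1}=\widehat\phi_{i,0}$, $\widehat\phi_{i,J+1}=\widehat\phi_{i,J}$ (existence and uniqueness being known, and $\widehat\phi\ge0$).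 *)

theory Defs
  imports "HOL-Analysis.Analysis"
begin

text \<open>Matrices (m_{i,j}), 0 \<le> i \<le> I, 0 \<le> j \<le> J, are represented as functions
  nat \<Rightarrow> nat \<Rightarrow> real; only entries with i \<le> I and j \<le> J are meaningful.\<close>

definition in_M_eps :: "nat \<Rightarrow> nat \<Rightarrow> real \<Rightarrow> (nat \<Rightarrow> nat \<Rightarrow> real) \<Rightarrow> bool" where
  "in_M_eps I J eps m \<longleftrightarrow> (\<forall>i\<le>I. \<forall>j\<le>J. m i j \<ge> eps)"

text \<open>Neighbours with the Neumann conventions phi_{i,-1} = phi_{i,0}, phi_{i,J+1} = phi_{i,J}.\<close>
definition left_nb :: "(nat \<Rightarrow> nat \<Rightarrow> real) \<Rightarrow> nat \<Rightarrow> nat \<Rightarrow> real" where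
  "left_nb phi i j = (if j = 0 then phi i 0 else phi i (j - 1))"

definition right_nb :: "nat \<Rightarrow> (nat \<Rightarrow> nat \<Rightarrow> real) \<Rightarrow> nat \<Rightarrow> nat \<Rightarrow> real" where
  "right_nb J phi i j = (if j = J then phi i J else phi i (j + 1))"

definition phi_scheme ::
  "real \<Rightarrow> real \<Rightarrow> nat \<Rightarrow> nat \<Rightarrow> (real \<Rightarrow> real) \<Rightarrow> (real \<Rightarrow> real \<Rightarrow> real)
   \<Rightarrow> (nat \<Rightarrow> nat \<Rightarrow> real) \<Rightarrow> (nat \<Rightarrow> nat \<Rightarrow> real) \<Rightarrow> bool" where
  "phi_scheme T \<sigma> I J uT f psi phi \<longleftrightarrow>
     (let dt = T / real I; dx = 1 / real J; x = (\<lambda>j::nat. real j * dx) in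
       (\<forall>j\<le>J. phi I j = exp (uT (x j) / \<sigma>\<^sup>2)) \<and>
       (\<forall>i<I. \<forall>j\<le>J.
          (phi (i+1) j - phi i j) / dt
          + \<sigma>\<^sup>2 / 2 * ((right_nb J phi i j - 2 * phi i j + left_nb phi i j) / dx\<^sup>2)
          = - (1 / \<sigma>\<^sup>2) * f (x j) (phi i j * psi i j) * phi i j))"

text \<open>hat Phi(hat psi): the unique solution of the scheme (entries outside the index
  range are fixed to 0 so that the solution is unique as a function).\<close>
definition Phi_hat ::
  "real \<Rightarrow> real \<Rightarrow> nat \<Rightarrow> nat \<Rightarrow> (real \<Rightarrow> real) \<Rightarrow> (real \<Rightarrow> real \<Rightarrow> real)
   \<Rightarrow> (nat \<Rightarrow> nat \<Rightarrow> real) \<Rightarrow> (nat \<Rightarrow> nat \<Rightarrow> real)" where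
  "Phi_hat T \<sigma> I J uT f psi =
     (THE phi. phi_scheme T \<sigma> I J uT f psi phi \<and> (\<forall>i j. (I < i \<or> J < j) \<longrightarrow> phi i j = 0))"

end

theory Submission
  imports Defs
begin

(* Writing h = 1/dt and c = sigma^2/(2 dx^2), one time step of the scheme is the
   nonlinear Neumann problem h (q - r) - c Delta q = f(x, q ps) q / sigma^2 for the row q
   at time i, given the row r at time i+1.  The operator h - c Delta satisfies a discrete
   maximum principle, and since f <= 0 is nonincreasing the reaction term is antitone;
   together they give a comparison principle for one step (row_comparison), which by
   backward induction in time becomes a comparison principle for the whole scheme
   (scheme_comparison).  This already contains the proposition, except that Phi_hat is a
   definite description: we must also show that the scheme has exactly one zero-extended
   solution.  Uniqueness is comparison applied both ways; existence of each time step is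
   proved by a shooting argument and the intermediate value theorem (neumann_problem_exists). *)

definition dlap :: "nat \<Rightarrow> (nat \<Rightarrow> real) \<Rightarrow> nat \<Rightarrow> real" where
  "dlap J q j = (if j = J then q J else q (j + 1)) - 2 * q j + (if j = 0 then q 0 else q (j - 1))"

definition grid :: "nat \<Rightarrow> nat \<Rightarrow> real" where
  "grid J j = real j * (1 / real J)"

(* One backward time step: given the row r at time i+1, the row q at time i solves
   h (q_j - r_j) - c (Delta q)_j = f(x_j, q_j ps_j) q_j / sigma^2, with h = 1/dt, c = sigma^2/(2 dx^2). *)
definition row_eq ::
  "real \<Rightarrow> real \<Rightarrow> real \<Rightarrow> nat \<Rightarrow> (real \<Rightarrow> real \<Rightarrow> real)
   \<Rightarrow> (nat \<Rightarrow> real) \<Rightarrow> (nat \<Rightarrow> real) \<Rightarrow> (nat \<Rightarrow> real) \<Rightarrow> bool" where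
  "row_eq h c \<sigma> J f ps r q \<longleftrightarrow>
     (\<forall>j\<le>J. h * (q j - r j) - c * dlap J q j = f (grid J j) (q j * ps j) * q j / \<sigma>\<^sup>2)"

lemma grid_in_unit: "j \<le> J \<Longrightarrow> grid J j \<in> {0..1}"
  by (cases "J = 0") (auto simp: grid_def field_simps)

lemma phi_scheme_rows:
  "phi_scheme T \<sigma> I J uT f psi phi \<longleftrightarrow>
     (\<forall>j\<le>J. phi I j = exp (uT (grid J j) / \<sigma>\<^sup>2)) \<and>
     (\<forall>i<I. row_eq (real I / T) (\<sigma>\<^sup>2 / 2 * (real J)\<^sup>2) \<sigma> J f (psi i) (phi (i + 1)) (phi i))"
proof -
  have lap: "right_nb J phi i j - 2 * phi i j + left_nb phi i j = dlap J (phi i) j" for i j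
    by (simp add: right_nb_def left_nb_def dlap_def)
  have eqn: "a / (T / real I) + \<sigma>\<^sup>2 / 2 * (b / (1 / real J)\<^sup>2) = - (1 / \<sigma>\<^sup>2) * F * q
      \<longleftrightarrow> real I / T * (- a) - \<sigma>\<^sup>2 / 2 * (real J)\<^sup>2 * b = F * q / \<sigma>\<^sup>2" for a b F q
    by (auto simp: field_simps power2_eq_square)
  show ?thesis
    unfolding phi_scheme_def row_eq_def Let_def lap eqn grid_def by (simp add: algebra_simps)
qed

lemma dlap_diff: "dlap J (\<lambda>j. a j - b j) j = dlap J a j - dlap J b j"
  by (simp add: dlap_def)

lemma dlap_at_max:
  assumes m: "m \<le> J" and max: "\<And>j. j \<le> J \<Longrightarrow> w j \<le> w m"
  shows "dlap J w m \<le> 0"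
proof -
  have "w (m - 1) \<le> w m" using m max by simp
  moreover have "m \<noteq> J \<Longrightarrow> w (m + 1) \<le> w m" using m max by simp
  ultimately show ?thesis by (auto simp: dlap_def)
qed

lemma discrete_max_principle:
  fixes w :: "nat \<Rightarrow> real"
  assumes h: "h > 0" and c: "c \<ge> 0"
    and sub: "\<And>j. j \<le> J \<Longrightarrow> w j > 0 \<Longrightarrow> h * w j - c * dlap J w j \<le> 0"
    and j: "j \<le> J"
  shows "w j \<le> 0"
proof -
  have "Max (w ` {..J}) \<in> w ` {..J}" by (intro Max_in) auto
  then obtain m where m: "m \<le> J" and "w m = Max (w ` {..J})" by (metis atMost_iff imageE)
  hence max: "\<And>k. k \<le> J \<Longrightarrow> w k \<le> w m" by simp
  have "w m \<le> 0"
  proof (rule ccontr)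
    assume "\<not> w m \<le> 0"
    hence "h * w m > 0" and "c * dlap J w m \<le> 0"
      using h c dlap_at_max[of m J w, OF m max] by (auto intro: mult_nonneg_nonpos)
    thus False using sub[OF m] \<open>\<not> w m \<le> 0\<close> by linarith
  qed
  thus ?thesis using max[OF j] by linarith
qed

lemma reaction_antitone:
  fixes g :: "real \<Rightarrow> real"
  assumes g_anti: "\<And>y z. y \<le> z \<Longrightarrow> g z \<le> g y" and g_nonpos: "\<And>y. g y \<le> 0"
    and st: "s \<le> t" "0 \<le> t" and p: "0 \<le> p" "p \<le> p'"
  shows "g (t * p') * t \<le> g (s * p) * s"
proof (cases "0 \<le> s")
  case True
  have "g (t * p') \<le> g (s * p)" using st p True by (intro g_anti mult_mono) auto
  hence "g (t * p') * t \<le> g (s * p) * t" using st by (intro mult_right_mono) auto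
  also have "\<dots> \<le> g (s * p) * s" using st g_nonpos by (intro mult_left_mono_neg) auto
  finally show ?thesis .
next
  case False
  have "g (t * p') * t \<le> 0" using st g_nonpos by (intro mult_nonpos_nonneg) auto
  also have "0 \<le> g (s * p) * s" using False g_nonpos by (intro mult_nonpos_nonpos) auto
  finally show ?thesis .
qed

lemma row_comparison:
  assumes h: "h > 0" and c: "c \<ge> 0"
    and f_mono: "\<And>x y z. x \<in> {0..1} \<Longrightarrow> y \<le> z \<Longrightarrow> f x z \<le> f x y"
    and f_nonpos: "\<And>x y. x \<in> {0..1} \<Longrightarrow> f x y \<le> 0"
    and eq1: "row_eq h c \<sigma> J f ps1 r1 q1" and eq2: "row_eq h c \<sigma> J f ps2 r2 q2"
    and r: "\<And>j. j \<le> J \<Longrightarrow> r2 j \<le> r1 j"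
    and ps: "\<And>j. j \<le> J \<Longrightarrow> 0 \<le> ps1 j \<and> ps1 j \<le> ps2 j"
    and q2_nonneg: "\<And>j. j \<le> J \<Longrightarrow> 0 \<le> q2 j"
    and j: "j \<le> J"
  shows "q2 j \<le> q1 j"
proof -
  have "(\<lambda>k. q2 k - q1 k) j \<le> 0"
  proof (rule discrete_max_principle[OF h c _ j])
    fix k assume k: "k \<le> J" and pos: "(\<lambda>k. q2 k - q1 k) k > 0"
    define g where "g = f (grid J k)"
    have react: "g (q2 k * ps2 k) * q2 k \<le> g (q1 k * ps1 k) * q1 k"
      unfolding g_def using pos q2_nonneg[OF k] ps[OF k]
      by (intro reaction_antitone f_mono f_nonpos grid_in_unit[OF k]) auto
    have "h * (q2 k - q1 k) - c * dlap J (\<lambda>k. q2 k - q1 k) k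
        = h * (r2 k - r1 k) + (g (q2 k * ps2 k) * q2 k - g (q1 k * ps1 k) * q1 k) / \<sigma>\<^sup>2"
      using eq1 eq2 k unfolding row_eq_def dlap_diff g_def by (simp add: algebra_simps diff_divide_distrib)
    also have "\<dots> \<le> 0"
      using h r[OF k] react by (intro add_nonpos_nonpos mult_nonneg_nonpos divide_nonpos_nonneg) auto
    finally show "h * (\<lambda>k. q2 k - q1 k) k - c * dlap J (\<lambda>k. q2 k - q1 k) k \<le> 0" by simp
  qed
  thus ?thesis by simp
qed

(* Nonnegative data give nonnegative rows: compare with the zero row. *)
lemma row_nonneg:
  assumes h: "h > 0" and c: "c \<ge> 0"
    and f_mono: "\<And>x y z. x \<in> {0..1} \<Longrightarrow> y \<le> z \<Longrightarrow> f x z \<le> f x y"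
    and f_nonpos: "\<And>x y. x \<in> {0..1} \<Longrightarrow> f x y \<le> 0"
    and eq: "row_eq h c \<sigma> J f ps r q"
    and r: "\<And>j. j \<le> J \<Longrightarrow> 0 \<le> r j" and ps: "\<And>j. j \<le> J \<Longrightarrow> 0 \<le> ps j"
    and j: "j \<le> J"
  shows "0 \<le> q j"
proof -
  have "row_eq h c \<sigma> J f ps (\<lambda>_. 0) (\<lambda>_. 0)" by (simp add: row_eq_def dlap_def)
  from row_comparison[OF h c f_mono f_nonpos eq this _ _ _ j] show ?thesis using r ps by simp
qed

lemma scheme_comparison:
  assumes T: "T > 0" and I: "I > 0"
    and f_mono: "\<And>x y z. x \<in> {0..1} \<Longrightarrow> y \<le> z \<Longrightarrow> f x z \<le> f x y"
    and f_nonpos: "\<And>x y. x \<in> {0..1} \<Longrightarrow> f x y \<le> 0"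
    and psi1_nonneg: "\<And>i j. i \<le> I \<Longrightarrow> j \<le> J \<Longrightarrow> 0 \<le> psi1 i j"
    and psi_le: "\<And>i j. i \<le> I \<Longrightarrow> j \<le> J \<Longrightarrow> psi1 i j \<le> psi2 i j"
    and sol1: "phi_scheme T \<sigma> I J uT f psi1 phi1"
    and sol2: "phi_scheme T \<sigma> I J uT f psi2 phi2"
    and i: "i \<le> I"
  shows "\<forall>j\<le>J. 0 \<le> phi2 i j \<and> phi2 i j \<le> phi1 i j"
  using i
proof (induction rule: inc_induct)
  case base
  show ?case using sol1 sol2 by (simp add: phi_scheme_rows)
next
  case (step n)
  define h where "h = real I / T"
  define c where "c = \<sigma>\<^sup>2 / 2 * (real J)\<^sup>2"
  have h: "h > 0" and c: "c \<ge> 0" using T I by (simp_all add: h_def c_def)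
  have eq1: "row_eq h c \<sigma> J f (psi1 n) (phi1 (Suc n)) (phi1 n)"
    and eq2: "row_eq h c \<sigma> J f (psi2 n) (phi2 (Suc n)) (phi2 n)"
    using sol1 sol2 step.hyps(2) by (simp_all add: phi_scheme_rows h_def c_def)
  have psi: "0 \<le> psi1 n j" "psi1 n j \<le> psi2 n j" if "j \<le> J" for j
    using psi1_nonneg psi_le step.hyps(2) that by simp_all
  have nonneg: "0 \<le> phi2 n j" if "j \<le> J" for j
    using row_nonneg[OF h c f_mono f_nonpos eq2 _ _ that] step.IH psi order_trans by blast
  have "phi2 n j \<le> phi1 n j" if "j \<le> J" for j
    using row_comparison[OF h c f_mono f_nonpos eq1 eq2 _ _ nonneg that] step.IH psi by blast
  thus ?case using nonneg by blast
qed

lemma scheme_unique_on_grid: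
  assumes T: "T > 0" and I: "I > 0"
    and f_mono: "\<And>x y z. x \<in> {0..1} \<Longrightarrow> y \<le> z \<Longrightarrow> f x z \<le> f x y"
    and f_nonpos: "\<And>x y. x \<in> {0..1} \<Longrightarrow> f x y \<le> 0"
    and psi_nonneg: "\<And>i j. i \<le> I \<Longrightarrow> j \<le> J \<Longrightarrow> 0 \<le> psi i j"
    and sol1: "phi_scheme T \<sigma> I J uT f psi phi1"
    and sol2: "phi_scheme T \<sigma> I J uT f psi phi2"
    and ij: "i \<le> I" "j \<le> J"
  shows "phi1 i j = phi2 i j"
  using scheme_comparison[OF T I f_mono f_nonpos psi_nonneg _ sol1 sol2 ij(1)]
    scheme_comparison[OF T I f_mono f_nonpos psi_nonneg _ sol2 sol1 ij(1)] ij(2)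
  by (meson order_refl order_antisym)

(* Shooting for the discrete Neumann problem Delta q = G(q): start at q_0 = s with
   zero left slope and march to the right; fst is the value q_j, snd the slope q_j - q_{j-1}. *)
primrec shoot :: "(nat \<Rightarrow> real \<Rightarrow> real) \<Rightarrow> real \<Rightarrow> nat \<Rightarrow> real \<times> real" where
  "shoot G s 0 = (s, 0)"
| "shoot G s (Suc j) =
     (let (q, d) = shoot G s j; d' = d + G j q in (q + d', d'))"

lemma shoot_Suc:
  "fst (shoot G s (Suc j)) = fst (shoot G s j) + snd (shoot G s (Suc j))"
  "snd (shoot G s (Suc j)) = snd (shoot G s j) + G j (fst (shoot G s j))"
  by (simp_all add: case_prod_beta Let_def)

declare shoot.simps(2) [simp del]

lemma shoot_continuous:
  assumes G: "\<And>j. j \<le> J \<Longrightarrow> continuous_on UNIV (G j)" and j: "j \<le> Suc J"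
  shows "continuous_on UNIV (\<lambda>s. fst (shoot G s j)) \<and> continuous_on UNIV (\<lambda>s. snd (shoot G s j))"
  using j
proof (induction j)
  case 0
  show ?case by (simp add: continuous_on_const continuous_on_id)
next
  case (Suc j)
  hence IH: "continuous_on UNIV (\<lambda>s. fst (shoot G s j))" "continuous_on UNIV (\<lambda>s. snd (shoot G s j))"
    by simp_all
  have "continuous_on UNIV (\<lambda>s. G j (fst (shoot G s j)))"
    using continuous_on_compose2[OF G IH(1)] Suc.prems by simp
  hence slope: "continuous_on UNIV (\<lambda>s. snd (shoot G s (Suc j)))"
    unfolding shoot_Suc(2) using IH(2) by (intro continuous_on_add)
  hence "continuous_on UNIV (\<lambda>s. fst (shoot G s (Suc j)))"
    unfolding shoot_Suc(1) using IH(1) by (intro continuous_on_add)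
  thus ?case using slope by blast
qed

lemma shoot_above:
  assumes G: "\<And>j t. j \<le> J \<Longrightarrow> M \<le> t \<Longrightarrow> 0 \<le> G j t" and j: "j \<le> Suc J"
  shows "M \<le> fst (shoot G M j) \<and> 0 \<le> snd (shoot G M j)"
  using j
proof (induction j)
  case (Suc j)
  hence "M \<le> fst (shoot G M j)" "0 \<le> snd (shoot G M j)" "0 \<le> G j (fst (shoot G M j))"
    using G by auto
  thus ?case by (simp add: shoot_Suc)
qed simp

lemma shoot_below:
  assumes G: "\<And>j t. j \<le> J \<Longrightarrow> t \<le> - M \<Longrightarrow> G j t \<le> 0" and j: "j \<le> Suc J"
  shows "fst (shoot G (- M) j) \<le> - M \<and> snd (shoot G (- M) j) \<le> 0"
  using j
proof (induction j)
  case (Suc j)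
  hence "fst (shoot G (- M) j) \<le> - M" "snd (shoot G (- M) j) \<le> 0" "G j (fst (shoot G (- M) j)) \<le> 0"
    using G by auto
  thus ?case by (simp add: shoot_Suc)
qed simp

(* A shot with vanishing final slope satisfies the right Neumann condition, hence
   solves the discrete problem. *)
lemma shoot_solves:
  assumes final: "snd (shoot G s (Suc J)) = 0" and j: "j \<le> J"
  shows "dlap J (\<lambda>k. fst (shoot G s k)) j = G j (fst (shoot G s j))"
proof -
  have right: "(if j = J then fst (shoot G s J) else fst (shoot G s (j + 1))) - fst (shoot G s j)
      = snd (shoot G s (Suc j))"
    using final by (simp add: shoot_Suc)
  have left: "fst (shoot G s j) - (if j = 0 then fst (shoot G s 0) else fst (shoot G s (j - 1)))
      = snd (shoot G s j)"
    by (cases j) (simp_all add: shoot_Suc)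
  show ?thesis using right left unfolding dlap_def shoot_Suc(2) by linarith
qed

(* Existence for Delta q = G(q) when G is continuous and has the signs of t for
   large |t|: the intermediate value theorem applied to the final slope. *)
lemma neumann_problem_exists:
  fixes G :: "nat \<Rightarrow> real \<Rightarrow> real"
  assumes cont: "\<And>j. j \<le> J \<Longrightarrow> continuous_on UNIV (G j)" and M: "0 \<le> M"
    and above: "\<And>j t. j \<le> J \<Longrightarrow> M \<le> t \<Longrightarrow> 0 \<le> G j t"
    and below: "\<And>j t. j \<le> J \<Longrightarrow> t \<le> - M \<Longrightarrow> G j t \<le> 0"
  shows "\<exists>q. \<forall>j\<le>J. dlap J q j = G j (q j)"
proof -
  let ?slope = "\<lambda>s. snd (shoot G s (Suc J))"
  have "continuous_on UNIV ?slope"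
    using shoot_continuous[where G = G and J = J, OF cont, of "Suc J"] by simp
  hence cont_slope: "continuous_on {-M..M} ?slope" by (rule continuous_on_subset) simp
  have low: "?slope (- M) \<le> 0"
    using shoot_below[where G = G and J = J and M = M, OF below, of "Suc J"] by simp
  have high: "0 \<le> ?slope M"
    using shoot_above[where G = G and J = J and M = M, OF above, of "Suc J"] by simp
  obtain s where "?slope s = 0"
    using IVT'[OF low high _ cont_slope] M by auto
  hence "\<forall>j\<le>J. dlap J (\<lambda>k. fst (shoot G s k)) j = G j (fst (shoot G s j))"
    using shoot_solves by blast
  thus ?thesis by blast
qed

lemma row_exists:
  assumes h: "h > 0" and c: "c > 0"
    and f_cont: "continuous_on ({0..1} \<times> UNIV) (\<lambda>(x, y). f x y)"
    and f_nonpos: "\<And>x y. x \<in> {0..1} \<Longrightarrow> f x y \<le> 0"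
  shows "\<exists>q. row_eq h c \<sigma> J f ps r q"
proof -
  define F where "F = (\<lambda>j t. f (grid J j) (t * ps j) * t / \<sigma>\<^sup>2)"
  define G where "G = (\<lambda>j t. (h * (t - r j) - F j t) / c)"
  have F_nonpos: "F j t \<le> 0" if "j \<le> J" "0 \<le> t" for j t
    using f_nonpos[OF grid_in_unit[OF that(1)]] that(2)
    by (auto simp: F_def intro!: divide_nonpos_nonneg mult_nonpos_nonneg)
  have F_nonneg: "0 \<le> F j t" if "j \<le> J" "t \<le> 0" for j t
    using f_nonpos[OF grid_in_unit[OF that(1)]] that(2)
    by (auto simp: F_def intro!: divide_nonneg_nonneg mult_nonpos_nonpos)
  define M where "M = Max ((\<lambda>j. \<bar>r j\<bar>) ` {..J})"
  have r_bound: "\<bar>r j\<bar> \<le> M" if "j \<le> J" for j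
    unfolding M_def using that by (intro Max_ge) auto
  have M: "0 \<le> M" using r_bound[of 0] by simp
  have cont: "continuous_on UNIV (G j)" if j: "j \<le> J" for j
  proof -
    have "continuous_on UNIV (\<lambda>t. (\<lambda>(x, y). f x y) (grid J j, t * ps j))"
      using grid_in_unit[OF j]
      by (intro continuous_on_compose2[OF f_cont]) (auto intro!: continuous_intros)
    thus ?thesis unfolding G_def F_def divide_inverse by (auto intro!: continuous_intros)
  qed
  have above: "0 \<le> G j t" if "j \<le> J" "M \<le> t" for j t
  proof -
    have "0 \<le> h * (t - r j)" using r_bound[OF that(1)] that(2) h by simp
    moreover have "F j t \<le> 0" using F_nonpos[OF that(1)] that(2) M by simp
    ultimately show ?thesis using c by (simp add: G_def)
  qed
  have below: "G j t \<le> 0" if "j \<le> J" "t \<le> - M" for j t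
  proof -
    have "h * (t - r j) \<le> 0" using r_bound[OF that(1)] that(2) h by (simp add: mult_nonneg_nonpos)
    moreover have "0 \<le> F j t" using F_nonneg[OF that(1)] that(2) M by simp
    ultimately show ?thesis using c by (simp add: G_def divide_nonpos_pos)
  qed
  obtain q where q: "\<And>j. j \<le> J \<Longrightarrow> dlap J q j = G j (q j)"
    using neumann_problem_exists[where G = G and J = J, OF cont M above below] by blast
  have "row_eq h c \<sigma> J f ps r q"
    unfolding row_eq_def using q c by (auto simp: G_def F_def field_simps)
  thus ?thesis by blast
qed

(* Existence for the scheme: solve the time steps backwards from the terminal row. *)
lemma scheme_exists:
  assumes T: "T > 0" and sigma: "\<sigma> > 0" and I: "I > 0" and J: "J > 0"
    and f_cont: "continuous_on ({0..1} \<times> UNIV) (\<lambda>(x, y). f x y)"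
    and f_nonpos: "\<And>x y. x \<in> {0..1} \<Longrightarrow> f x y \<le> 0"
  shows "\<exists>phi. phi_scheme T \<sigma> I J uT f psi phi"
proof -
  define h where "h = real I / T"
  define c where "c = \<sigma>\<^sup>2 / 2 * (real J)\<^sup>2"
  have h: "h > 0" and c: "c > 0" using T I sigma J by (simp_all add: h_def c_def)
  have "\<forall>i r. \<exists>q. row_eq h c \<sigma> J f (psi i) r q"
    using row_exists[OF h c f_cont] f_nonpos by blast
  then obtain S where S: "\<And>i r. row_eq h c \<sigma> J f (psi i) r (S i r)"
    by metis
  define rows where
    "rows = rec_nat (\<lambda>j. exp (uT (grid J j) / \<sigma>\<^sup>2)) (\<lambda>k prev. S (I - Suc k) prev)"
  define phi where "phi i = rows (I - i)" for i
  have step: "phi i = S i (phi (i + 1))" if "i < I" for i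
  proof -
    have "I - i = Suc (I - Suc i)" and "I - Suc (I - Suc i) = i" using that by simp_all
    thus ?thesis by (simp add: phi_def rows_def)
  qed
  have "phi_scheme T \<sigma> I J uT f psi phi"
    unfolding phi_scheme_rows h_def[symmetric] c_def[symmetric]
    using step S by (simp add: phi_def rows_def)
  thus ?thesis by blast
qed

lemma row_eq_cong:
  assumes "\<And>j. j \<le> J \<Longrightarrow> q j = q' j" and "\<And>j. j \<le> J \<Longrightarrow> r j = r' j"
  shows "row_eq h c \<sigma> J f ps r q \<longleftrightarrow> row_eq h c \<sigma> J f ps r' q'"
proof -
  have "dlap J q j = dlap J q' j" if "j \<le> J" for j
    using assms(1) that by (auto simp: dlap_def)
  thus ?thesis using assms by (auto simp: row_eq_def)
qed

lemma phi_scheme_grid_cong: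
  assumes "\<And>i j. i \<le> I \<Longrightarrow> j \<le> J \<Longrightarrow> phi i j = phi' i j"
  shows "phi_scheme T \<sigma> I J uT f psi phi \<longleftrightarrow> phi_scheme T \<sigma> I J uT f psi phi'"
proof -
  have "row_eq h c \<sigma> J f (psi i) (phi (i + 1)) (phi i) \<longleftrightarrow>
        row_eq h c \<sigma> J f (psi i) (phi' (i + 1)) (phi' i)" if "i < I" for h c i
    using assms that by (intro row_eq_cong) auto
  thus ?thesis using assms unfolding phi_scheme_rows by auto
qed

lemma Phi_hat_scheme:
  assumes T: "T > 0" and sigma: "\<sigma> > 0" and I: "I > 0" and J: "J > 0"
    and f_cont: "continuous_on ({0..1} \<times> UNIV) (\<lambda>(x, y). f x y)"
    and f_mono: "\<And>x y z. x \<in> {0..1} \<Longrightarrow> y \<le> z \<Longrightarrow> f x z \<le> f x y"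
    and f_nonpos: "\<And>x y. x \<in> {0..1} \<Longrightarrow> f x y \<le> 0"
    and psi_nonneg: "\<And>i j. i \<le> I \<Longrightarrow> j \<le> J \<Longrightarrow> 0 \<le> psi i j"
  shows "phi_scheme T \<sigma> I J uT f psi (Phi_hat T \<sigma> I J uT f psi)"
proof -
  let ?sol = "\<lambda>phi. phi_scheme T \<sigma> I J uT f psi phi \<and> (\<forall>i j. (I < i \<or> J < j) \<longrightarrow> phi i j = 0)"
  obtain phi where phi: "phi_scheme T \<sigma> I J uT f psi phi"
    using scheme_exists[OF T sigma I J f_cont f_nonpos] by blast
  define phi0 where "phi0 i j = (if i \<le> I \<and> j \<le> J then phi i j else 0)" for i j
  have "?sol phi0"
    using phi phi_scheme_grid_cong[of I J phi0 phi] by (auto simp: phi0_def)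
  moreover have "phi1 = phi2" if "?sol phi1" "?sol phi2" for phi1 phi2
  proof (intro ext)
    fix i j
    show "phi1 i j = phi2 i j"
    proof (cases "i \<le> I \<and> j \<le> J")
      case True
      thus ?thesis
        using that scheme_unique_on_grid[where f = f and psi = psi, OF T I f_mono f_nonpos psi_nonneg]
        by blast
    next
      case False
      thus ?thesis using that by (auto simp: not_le)
    qed
  qed
  ultimately have "\<exists>!phi. ?sol phi" by blast
  hence "?sol (Phi_hat T \<sigma> I J uT f psi)"
    unfolding Phi_hat_def by (rule theI')
  thus ?thesis by blast
qed

theorem proposition8:
  fixes T \<sigma> :: real and I J :: nat and uT :: "real \<Rightarrow> real" and f :: "real \<Rightarrow> real \<Rightarrow> real"
    and psi1 psi2 :: "nat \<Rightarrow> nat \<Rightarrow> real"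
  assumes T_pos: "T > 0" and sigma_pos: "\<sigma> > 0"
    and I_pos: "I > 0" and J_pos: "J > 0"
    and uT_bdd: "bounded (uT ` {0..1})"
    and f_cont: "continuous_on ({0..1} \<times> UNIV) (\<lambda>(x, y). f x y)"
    and f_mono: "\<And>x y z. x \<in> {0..1} \<Longrightarrow> y \<le> z \<Longrightarrow> f x z \<le> f x y"
    and f_bdd: "bounded ((\<lambda>(x, y). f x y) ` ({0..1} \<times> UNIV))"
    and f_nonpos: "\<And>x y. x \<in> {0..1} \<Longrightarrow> f x y \<le> 0"
    and psi1_M0: "in_M_eps I J 0 psi1" and psi2_M0: "in_M_eps I J 0 psi2"
    and le: "\<And>i j. i \<le> I \<Longrightarrow> j \<le> J \<Longrightarrow> psi1 i j \<le> psi2 i j"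
  shows "\<forall>i\<le>I. \<forall>j\<le>J. Phi_hat T \<sigma> I J uT f psi1 i j \<ge> Phi_hat T \<sigma> I J uT f psi2 i j"
proof -
  have psi1_nonneg: "\<And>i j. i \<le> I \<Longrightarrow> j \<le> J \<Longrightarrow> 0 \<le> psi1 i j"
    and psi2_nonneg: "\<And>i j. i \<le> I \<Longrightarrow> j \<le> J \<Longrightarrow> 0 \<le> psi2 i j"
    using psi1_M0 psi2_M0 by (simp_all add: in_M_eps_def)
  note Phi_scheme = Phi_hat_scheme[OF T_pos sigma_pos I_pos J_pos f_cont f_mono f_nonpos]
  have sol1: "phi_scheme T \<sigma> I J uT f psi1 (Phi_hat T \<sigma> I J uT f psi1)"
    using Phi_scheme psi1_nonneg by blast
  have sol2: "phi_scheme T \<sigma> I J uT f psi2 (Phi_hat T \<sigma> I J uT f psi2)"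
    using Phi_scheme psi2_nonneg by blast
  show ?thesis
    using scheme_comparison[OF T_pos I_pos f_mono f_nonpos psi1_nonneg le sol1 sol2] by blast
qed

end
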